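(* Let $F:[0,\infty)\to\mathbb{R}$ be $C^{1,1}$ with $F'(0)=0$ and let $\Sigma=\{(w,F(|w|)):w\in\mathbb{R}^2\}\subset\mathbb{R}^3$. Then every compact subset of $(\Sigma,d_{\mathbb{H}})$ bi-Lipschitz embeds in some Euclidean space $\mathbb{R}^n$.
   Context: For $w=(x,y,z)$, $w'=(x',y',z')$, $d_{\mathbb{H}}(w,w')=|x-x'|+|y-y'|+|z-z'+\tfrac12(xy'-x'y)|^{1/2}$. $(A,d_{\mathbb{H}})$ bi-Lipschitz embeds in $\mathbb{R}^n$ if there are $L\ge1$ and $f:A\to\mathbb{R}^n$ with $L^{-1}d_{\mathbb{H}}(a,b)\le|f(a)-f(b)|\le Ld_{\mathbb{H}}(a,b)$ for all $a,b\in A$. *)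

theory Defs
  imports "HOL-Analysis.Analysis"
begin

type_synonym heis = "real \<times> real \<times> real"

definition dH :: "heis \<Rightarrow> heis \<Rightarrow> real" where
  "dH w w' = (case w of (x, y, z) \<Rightarrow> case w' of (x', y', z') \<Rightarrow>
      \<bar>x - x'\<bar> + \<bar>y - y'\<bar> + sqrt \<bar>z - z' + (1/2) * (x * y' - x' * y)\<bar>)"

definition C11_flat_at_0 :: "(real \<Rightarrow> real) \<Rightarrow> bool" where
  "C11_flat_at_0 F \<longleftrightarrow> (\<exists>F'. (\<forall>t\<ge>0. (F has_real_derivative F' t) (at t within {0..}))
      \<and> (\<exists>K. \<forall>s\<ge>0. \<forall>t\<ge>0. \<bar>F' s - F' t\<bar> \<le> K * \<bar>s - t\<bar>)
      \<and> F' 0 = 0)"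

definition rot_graph :: "(real \<Rightarrow> real) \<Rightarrow> heis set" where
  "rot_graph F = {(x, y, F (sqrt (x\<^sup>2 + y\<^sup>2))) | x y. True}"

text \<open>Vectors of R^n are represented as functions nat => real vanishing from index n on;
  Euclidean distance is sqrt of the sum of squares over indices < n.\<close>
definition bilip_embeds_Rn :: "'a set \<Rightarrow> ('a \<Rightarrow> 'a \<Rightarrow> real) \<Rightarrow> nat \<Rightarrow> bool" where
  "bilip_embeds_Rn A d n \<longleftrightarrow> (\<exists>L::real. L \<ge> 1 \<and> (\<exists>f :: 'a \<Rightarrow> nat \<Rightarrow> real.
      (\<forall>a\<in>A. \<forall>i\<ge>n. f a i = 0) \<and>
      (\<forall>a\<in>A. \<forall>b\<in>A.
         d a b / L \<le> sqrt (\<Sum>i<n. (f a i - f b i)\<^sup>2) \<and>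
         sqrt (\<Sum>i<n. (f a i - f b i)\<^sup>2) \<le> L * d a b)))"

end

theory Submission
  imports Defs
begin

(*
  Write the points of the surface as (w, F |w|) with w complex. For two such points d_H is
  comparable to |w - w'| + |V w w'|^(1/2), where V w w' = F |w| - F |w'| + Im (cnj w * w') / 2 is
  the vertical gap. The embedding into C^7 = R^14 is w |-> (w, |w| T (theta w)): T is a
  Weierstrass-type snowflake map of the circle into C^6, |T a - T b|^2 ~ |e^(ia) - e^(ib)|, and
  theta w is the argument of w rotated back by psi |w|, where psi' = 2 F' / t^2.
  If |w| <= |w'| and |w'| - |w| is small compared with |w'|, this twist makes V w w' equal to
  |w| |w'| Im ((rho - 1) e^(i beta)) / 2 up to O((|w'| - |w|)^2), where rho = e^(i (theta w' - theta w))
  and beta = psi |w'| - psi |w| is small. That term is comparable to |w'|^2 |rho - 1| unless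
  Re (rho e^(i beta)) <= 0, and then |w - w'| >= |w|; in the remaining case every quantity is
  O(|w - w'|^2). So |V| and the squared snowflake distance dominate each other up to |w - w'|^2,
  which makes d_H comparable to the Euclidean distance of the images.
*)

lemma third_le_sin:
  fixes y :: real
  assumes "0 \<le> y" "y \<le> 2"
  shows "y / 3 \<le> sin y"
proof -
  have "\<bar>sin y - y\<bar> \<le> y ^ 3 / 6"
    using Maclaurin_sin_bound[of y 3] assms
    by (simp add: sin_coeff_def fact_numeral eval_nat_numeral)
  moreover have "y ^ 3 \<le> 4 * y"
    using mult_right_mono[of "y\<^sup>2" 4 y] power_mono[of y 2 2] assms
    by (simp add: power3_eq_cube power2_eq_square)
  ultimately show ?thesis
    by linarith
qed

lemma one_minus_cos_le: "1 - cos x \<le> x\<^sup>2 / 2" for x :: real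
proof -
  have "1 - cos x = 2 * (sin (x / 2))\<^sup>2"
    using cos_double_sin[of "x / 2"] by simp
  also have "(sin (x / 2))\<^sup>2 \<le> (x / 2)\<^sup>2"
    using abs_sin_x_le_abs_x[of "x / 2"] by (metis abs_ge_zero power2_abs power_mono)
  finally show ?thesis
    by (simp add: power_divide)
qed

lemma norm_cis_diff: "cmod (cis a - cis b) = 2 * \<bar>sin ((a - b) / 2)\<bar>"
proof -
  have "cis a - cis b = cis b * (exp (\<i> * of_real (a - b)) - 1)"
    by (simp add: cis_conv_exp algebra_simps flip: exp_add)
  then show ?thesis
    by (simp only: norm_mult dist_exp_i_1) simp
qed

lemma exists_reduced_angle:
  obtains x where "0 \<le> x" "x \<le> pi"
    "\<And>n::nat. cmod (cis (n * a) - cis (n * b)) = 2 * \<bar>sin (n * x / 2)\<bar>"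
proof -
  obtain y where y: "- pi < y" "y \<le> pi" "sin y = sin (a - b)" "cos y = cos (a - b)"
    using sincos_principal_value[of "a - b"] by blast
  have "cis y = cis (a - b)"
    using y by (simp add: complex_eq_iff)
  then have "cis (n * (a - b)) = cis (n * y)" for n :: nat
    by (metis Complex.DeMoivre)
  moreover have "cis (n * a) = cis (n * b) * cis (n * (a - b))" for n :: nat
    by (simp add: cis_mult algebra_simps)
  ultimately have "cis (n * a) - cis (n * b) = cis (n * b) * (cis (n * y) - cis 0)" for n :: nat
    by (simp add: algebra_simps)
  then have "cmod (cis (n * a) - cis (n * b)) = 2 * \<bar>sin (n * y / 2)\<bar>" for n :: nat
    using norm_cis_diff[of "n * y" 0] by (simp add: norm_mult)
  moreover have "\<bar>sin (n * y / 2)\<bar> = \<bar>sin (n * \<bar>y\<bar> / 2)\<bar>" for n :: nat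
    by (cases "0 \<le> y") auto
  ultimately show thesis
    using that[of "\<bar>y\<bar>"] y by auto
qed

lemma exists_least_power_exceeding:
  fixes b y c :: real
  assumes "1 < b" "0 < y"
  obtains n :: nat where "c < b ^ n * y" "\<And>k. k < n \<Longrightarrow> b ^ k * y \<le> c"
proof -
  obtain n :: nat where "c / y < b ^ n"
    using real_arch_pow[OF assms(1)] by blast
  then have "c < b ^ n * y"
    using assms(2) by (simp add: field_simps)
  then show thesis
    using exists_least_iff[of "\<lambda>n. c < b ^ n * y"] that not_less by blast
qed

section \<open>Lacunary series\<close>

lemma lacunary_geometric_head: "(\<Sum>i<n. (2::real) ^ (6 * i + m)) \<le> 2 ^ (6 * n + m) / 63"
proof (induction n)
  case (Suc n)
  have "(2::real) ^ (6 * Suc n + m) = 64 * 2 ^ (6 * n + m)"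
    by (simp add: power_add)
  then show ?case
    using Suc by simp
qed simp

lemma lacunary_geometric_tail:
  "(\<lambda>i. (1/2::real) ^ (6 * (i + n) + m)) sums ((64/63) * (1/2) ^ (6 * n + m))"
proof -
  have "(1/2::real) ^ (6 * (i + n) + m) = (1/2) ^ (6 * n + m) * ((1/2) ^ 6) ^ i" for i
    by (simp add: power_add mult.commute flip: power_mult)
  moreover have "(1/2::real) ^ 6 = 1/64"
    by (simp add: power_divide)
  moreover have "(\<lambda>i. (1/2::real) ^ (6 * n + m) * (1/64) ^ i) sums ((1/2) ^ (6 * n + m) * (64/63))"
    using sums_mult[OF geometric_sums[of "1/64::real"]] by simp
  ultimately show ?thesis
    by (simp add: mult.commute)
qed

lemma norm_sum_lacunary_head:
  fixes u :: "nat \<Rightarrow> 'a::real_normed_vector"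
  assumes "0 \<le> x" and "\<And>i. norm (u i) \<le> 2 ^ (6 * i + m) * x"
  shows "norm (\<Sum>i<n. u i) \<le> 2 ^ (6 * n + m) * x / 63"
proof -
  have "norm (\<Sum>i<n. u i) \<le> (\<Sum>i<n. 2 ^ (6 * i + m)) * x"
    using norm_sum[of u "{..<n}"] sum_mono[of "{..<n}" "\<lambda>i. norm (u i)", OF assms(2)]
    by (simp add: sum_distrib_right)
  also have "\<dots> \<le> 2 ^ (6 * n + m) / 63 * x"
    by (rule mult_right_mono[OF lacunary_geometric_head assms(1)])
  finally show ?thesis
    by simp
qed

lemma
  fixes u :: "nat \<Rightarrow> 'a::banach"
  assumes "\<And>i. norm (u i) \<le> 2 * (1/2) ^ (6 * i + m)"
  shows summable_lacunary: "summable u"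
    and norm_suminf_lacunary_tail:
      "norm (\<Sum>i. u (i + n)) \<le> (128/63) * (1/2) ^ (6 * n + m)"
proof -
  have tail: "(\<lambda>i. 2 * (1/2::real) ^ (6 * (i + k) + m)) sums (2 * ((64/63) * (1/2) ^ (6 * k + m)))"
    for k
    by (rule sums_mult[OF lacunary_geometric_tail])
  show "summable u"
    by (rule summable_comparison_test'[OF sums_summable[OF tail[of 0]]]) (use assms in simp)
  have "norm (\<Sum>i. u (i + n)) \<le> (\<Sum>i. 2 * (1/2) ^ (6 * (i + n) + m))"
    using assms by (intro norm_suminf_le sums_summable[OF tail])
  then show "norm (\<Sum>i. u (i + n)) \<le> (128/63) * (1/2) ^ (6 * n + m)"
    using sums_unique[OF tail[of n]] by simp
qed

lemma exists_lacunary_cutoff: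
  fixes x :: real
  assumes "0 < x"
  obtains J where "1 \<le> 2 ^ (6 * J + m) * sqrt x" "J = 0 \<or> 2 ^ (6 * J + m) * sqrt x \<le> 64"
proof -
  have sq: "(4 ^ 6) ^ k * (4 ^ m * x) = (2 ^ (6 * k + m) * sqrt x)\<^sup>2" for k
  proof -
    have "(2 ^ (6 * k + m) * sqrt x)\<^sup>2 = (2 ^ (6 * k + m))\<^sup>2 * x"
      using assms by (simp add: power_mult_distrib)
    also have "(2 ^ (6 * k + m))\<^sup>2 = (4::real) ^ (6 * k + m)"
      by (simp add: power2_eq_square flip: power_mult_distrib)
    also have "\<dots> = (4 ^ 6) ^ k * 4 ^ m"
      by (simp only: power_add power_mult)
    finally show ?thesis
      by (simp only: mult.assoc)
  qed
  obtain J where above: "1 < (2 ^ (6 * J + m) * sqrt x)\<^sup>2"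
    and below: "\<And>k. k < J \<Longrightarrow> (2 ^ (6 * k + m) * sqrt x)\<^sup>2 \<le> 1"
    using exists_least_power_exceeding[of "4 ^ 6" "4 ^ m * x" 1, unfolded sq] assms by auto
  have "0 \<le> 2 ^ (6 * J + m) * sqrt x"
    using assms by simp
  then have "1 \<le> 2 ^ (6 * J + m) * sqrt x"
    using above by (metis less_imp_le one_power2 power2_le_imp_le)
  moreover have "2 ^ (6 * J + m) * sqrt x \<le> 64" if "J = Suc k" for k
  proof -
    have "(2::real) ^ (6 * J + m) = 64 * 2 ^ (6 * k + m)"
      using that by (simp add: power_add)
    then have "(2 ^ (6 * J + m) * sqrt x)\<^sup>2 = 64\<^sup>2 * (2 ^ (6 * k + m) * sqrt x)\<^sup>2"
      by (simp only: power_mult_distrib mult.assoc)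
    also have "\<dots> \<le> 64\<^sup>2"
      using below[of k] that by simp
    finally show ?thesis
      by (rule power2_le_imp_le) simp
  qed
  ultimately show thesis
    using that not0_implies_Suc by blast
qed

lemma norm_suminf_lacunary_le_sqrt:
  fixes u :: "nat \<Rightarrow> 'a::banach"
  assumes "0 \<le> x"
    and head: "\<And>i. norm (u i) \<le> 2 ^ (6 * i + m) * x"
    and tail: "\<And>i. norm (u i) \<le> 2 * (1/2) ^ (6 * i + m)"
  shows "norm (suminf u) \<le> 4 * sqrt x"
proof (cases "x = 0")
  case True
  then have "u = (\<lambda>i. 0)"
    using head by (simp add: fun_eq_iff)
  then show ?thesis
    using assms(1) by simp
next
  case False
  then have "0 < x"
    using assms(1) by simp
  then obtain J where J: "1 \<le> 2 ^ (6 * J + m) * sqrt x" "J = 0 \<or> 2 ^ (6 * J + m) * sqrt x \<le> 64"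
    by (rule exists_lacunary_cutoff)
  have "(1/2) ^ (6 * J + m) \<le> sqrt x"
    using J(1) by (simp add: field_simps)
  then have tail_J: "norm (\<Sum>i. u (i + J)) \<le> (128/63) * sqrt x"
    using norm_suminf_lacunary_tail[OF tail, of J] by simp
  have "norm (\<Sum>i<J. u i) \<le> 2 ^ (6 * J + m) * x / 63"
    by (rule norm_sum_lacunary_head[OF assms(1) head])
  moreover have "J \<noteq> 0 \<Longrightarrow> 2 ^ (6 * J + m) * x \<le> 64 * sqrt x"
    using J(2) \<open>0 < x\<close> mult_right_mono[of "2 ^ (6 * J + m) * sqrt x" 64 "sqrt x"]
    by (simp add: mult.assoc)
  ultimately have head_J: "norm (\<Sum>i<J. u i) \<le> (64/63) * sqrt x"
    by (cases "J = 0") (use \<open>0 < x\<close> in auto)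
  have "suminf u = (\<Sum>i. u (i + J)) + (\<Sum>i<J. u i)"
    by (rule suminf_split_initial_segment[OF summable_lacunary[OF tail]])
  then have "norm (suminf u) \<le> norm (\<Sum>i. u (i + J)) + norm (\<Sum>i<J. u i)"
    by (simp add: norm_triangle_ineq)
  moreover have "0 \<le> sqrt x"
    using \<open>0 < x\<close> by simp
  ultimately show ?thesis
    using tail_J head_J by linarith
qed

lemma norm_suminf_lacunary_ge:
  fixes u :: "nat \<Rightarrow> 'a::banach"
  assumes "0 \<le> x"
    and head: "\<And>i. norm (u i) \<le> 2 ^ (6 * i + m) * x"
    and tail: "\<And>i. norm (u i) \<le> 2 * (1/2) ^ (6 * i + m)"
    and peak: "4 ^ (6 * j + m) * x \<le> pi" "(1/2) ^ (6 * j + m) * (pi / 12) \<le> norm (u j)"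
  shows "(1/2) ^ (6 * j + m) / 7 \<le> norm (suminf u)"
proof -
  define q :: real where "q = (1/2) ^ (6 * j + m)"
  have "q > 0"
    unfolding q_def by simp
  have "(2::real) ^ (6 * j + m) = q * 4 ^ (6 * j + m)"
    unfolding q_def by (simp add: power_one_over flip: power_divide)
  moreover have "q * (4 ^ (6 * j + m) * x) \<le> q * pi"
    using peak(1) \<open>q > 0\<close> by simp
  ultimately have head_j: "norm (\<Sum>i<j. u i) \<le> q * pi / 63"
    using norm_sum_lacunary_head[OF assms(1) head, of j] by (simp add: mult.assoc)
  have "(1/2::real) ^ (6 * Suc j + m) = q * (1/2) ^ 6"
    unfolding q_def by (simp add: power_add)
  also have "(1/2::real) ^ 6 = 1/64"
    by (simp add: power_divide)
  finally have tail_j: "norm (\<Sum>i. u (i + Suc j)) \<le> q * 2 / 63"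
    using norm_suminf_lacunary_tail[OF tail, of "Suc j"] by simp
  have "suminf u = (\<Sum>i. u (i + Suc j)) + (\<Sum>i<j. u i) + u j"
    using suminf_split_initial_segment[OF summable_lacunary[OF tail], of "Suc j"] by simp
  then have "norm (u j) - norm (\<Sum>i. u (i + Suc j)) - norm (\<Sum>i<j. u i) \<le> norm (suminf u)"
    using norm_triangle_ineq4[of "suminf u" "\<Sum>i. u (i + Suc j)"]
      norm_triangle_ineq4[of "suminf u - (\<Sum>i. u (i + Suc j))" "\<Sum>i<j. u i"] by simp
  moreover have "q / 7 \<le> q * (pi / 12) - q * 2 / 63 - q * pi / 63"
    using pi_gt3 \<open>q > 0\<close> by (simp add: field_simps)
  ultimately show ?thesis
    using peak(2) head_j tail_j unfolding q_def by linarith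
qed

section \<open>A snowflake embedding of the circle\<close>

text \<open>Splitting the frequencies \<open>4 ^ k\<close> by \<open>k mod 6\<close> makes each coordinate lacunary
  enough for a single term to dominate the sum (\<open>norm_suminf_lacunary_ge\<close>).\<close>

definition snowflake_coord :: "nat \<Rightarrow> real \<Rightarrow> complex" where
  "snowflake_coord m a = (\<Sum>i. of_real ((1/2) ^ (6 * i + m)) * cis (4 ^ (6 * i + m) * a))"

lemma norm_snowflake_coord_le: "cmod (snowflake_coord m a) \<le> 2"
proof -
  have "cmod (snowflake_coord m a) \<le> (\<Sum>i. (1/2::real) ^ i)"
    unfolding snowflake_coord_def
  proof (rule norm_suminf_le)
    show "cmod (of_real ((1/2) ^ (6 * i + m)) * cis (4 ^ (6 * i + m) * a)) \<le> (1/2) ^ i" for i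
      by (simp add: norm_mult norm_power power_decreasing)
  qed simp
  then show ?thesis
    using suminf_geometric[of "1/2::real"] by simp
qed

lemma snowflake_coord_diff:
  "snowflake_coord m a - snowflake_coord m b =
    (\<Sum>i. of_real ((1/2) ^ (6 * i + m)) * (cis (4 ^ (6 * i + m) * a) - cis (4 ^ (6 * i + m) * b)))"
proof -
  have "summable (\<lambda>i. of_real ((1/2) ^ (6 * i + m)) * cis (4 ^ (6 * i + m) * c))" for c
    by (rule summable_lacunary[where m = m]) (simp add: norm_mult norm_power)
  then show ?thesis
    unfolding snowflake_coord_def by (simp add: suminf_diff right_diff_distrib)
qed

context
  fixes a b x :: real
  assumes angle: "0 \<le> x" "x \<le> pi"
    and reduced: "\<And>n::nat. cmod (cis (n * a) - cis (n * b)) = 2 * \<bar>sin (n * x / 2)\<bar>"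
begin

lemma norm_snowflake_term:
  "cmod (of_real ((1/2) ^ k) * (cis (4 ^ k * a) - cis (4 ^ k * b))) =
    (1/2) ^ k * (2 * \<bar>sin (4 ^ k * x / 2)\<bar>)"
  using reduced[of "4 ^ k"] by (simp add: norm_mult norm_power)

lemma norm_snowflake_term_le_linear:
  "cmod (of_real ((1/2) ^ k) * (cis (4 ^ k * a) - cis (4 ^ k * b))) \<le> 2 ^ k * x"
proof -
  have "(1/2) ^ k * (2 * \<bar>sin (4 ^ k * x / 2)\<bar>) \<le> (1/2) ^ k * (4 ^ k * x)"
    using abs_sin_x_le_abs_x[of "4 ^ k * x / 2"] angle by (intro mult_left_mono) auto
  also have "\<dots> = 2 ^ k * x"
    by (simp add: field_simps flip: power_mult_distrib)
  finally show ?thesis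
    by (simp only: norm_snowflake_term)
qed

lemma norm_snowflake_term_le_const:
  "cmod (of_real ((1/2) ^ k) * (cis (4 ^ k * a) - cis (4 ^ k * b))) \<le> 2 * (1/2) ^ k"
  unfolding norm_snowflake_term by simp

lemma norm_snowflake_coord_diff_le: "cmod (snowflake_coord m a - snowflake_coord m b) \<le> 4 * sqrt x"
  unfolding snowflake_coord_diff
  by (rule norm_suminf_lacunary_le_sqrt[OF angle(1) norm_snowflake_term_le_linear
        norm_snowflake_term_le_const])

lemma snowflake_coords_upper:
  "(\<Sum>m<6. (cmod (snowflake_coord m a - snowflake_coord m b))\<^sup>2) \<le> 288 * cmod (cis a - cis b)"
proof -
  have "(cmod (snowflake_coord m a - snowflake_coord m b))\<^sup>2 \<le> 16 * x" for m
    using power_mono[OF norm_snowflake_coord_diff_le[of m], of 2] angle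
    by (simp add: power_mult_distrib)
  then have "(\<Sum>m<6. (cmod (snowflake_coord m a - snowflake_coord m b))\<^sup>2) \<le> (\<Sum>m<6::nat. 16 * x)"
    by (intro sum_mono)
  then have "(\<Sum>m<6. (cmod (snowflake_coord m a - snowflake_coord m b))\<^sup>2) \<le> 96 * x"
    by simp
  moreover have "x / 2 / 3 \<le> sin (x / 2)"
    using angle pi_less_4 by (intro third_le_sin) auto
  ultimately show ?thesis
    using reduced[of 1] by simp
qed

lemma norm_snowflake_coord_diff_ge:
  assumes "pi / 4 < 4 ^ j * x" "4 ^ j * x \<le> pi"
  shows "(1/2) ^ j / 7 \<le> cmod (snowflake_coord (j mod 6) a - snowflake_coord (j mod 6) b)"
proof -
  have j: "j = 6 * (j div 6) + j mod 6"
    by simp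
  have "4 ^ j * x / 2 / 3 \<le> sin (4 ^ j * x / 2)"
    using assms angle pi_less_4 by (intro third_le_sin) auto
  then have "(1/2) ^ j * (pi / 12) \<le> (1/2) ^ j * (2 * \<bar>sin (4 ^ j * x / 2)\<bar>)"
    using assms(1) by (intro mult_left_mono) auto
  then show ?thesis
    unfolding snowflake_coord_diff
    using norm_suminf_lacunary_ge[OF angle(1) norm_snowflake_term_le_linear
        norm_snowflake_term_le_const, where m = "j mod 6" and j = "j div 6"]
      assms(2) norm_snowflake_term
    by (simp flip: j)
qed

lemma snowflake_coords_lower:
  "cmod (cis a - cis b) / 196 \<le> (\<Sum>m<6. (cmod (snowflake_coord m a - snowflake_coord m b))\<^sup>2)"
proof (cases "x = 0")
  case True
  then show ?thesis
    using reduced[of 1] by (simp add: sum_nonneg)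
next
  case False
  then obtain j where above: "pi / 4 < 4 ^ j * x"
    and below: "\<And>k. k < j \<Longrightarrow> 4 ^ k * x \<le> pi / 4"
    using exists_least_power_exceeding[of 4 x "pi / 4"] angle by auto
  have peak: "4 ^ j * x \<le> pi"
  proof (cases j)
    case (Suc i)
    then show ?thesis
      using below[of i] by simp
  qed (use angle in simp)
  define m where "m = j mod 6"
  have "((1/2) ^ j / 7)\<^sup>2 \<le> (cmod (snowflake_coord m a - snowflake_coord m b))\<^sup>2"
    unfolding m_def using norm_snowflake_coord_diff_ge[OF above peak] by (rule power_mono) simp
  also have "\<dots> \<le> (\<Sum>m<6. (cmod (snowflake_coord m a - snowflake_coord m b))\<^sup>2)"
    by (rule member_le_sum) (auto simp: m_def)
  finally have "((1/2) ^ j / 7)\<^sup>2 \<le> (\<Sum>m<6. (cmod (snowflake_coord m a - snowflake_coord m b))\<^sup>2)" .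
  moreover have "cmod (cis a - cis b) \<le> x"
    using reduced[of 1] abs_sin_x_le_abs_x[of "x / 2"] angle by simp
  moreover have "x \<le> pi * (1/4) ^ j"
    using peak by (simp add: field_simps)
  moreover have "pi * (1/4) ^ j \<le> 196 * ((1/2) ^ j / 7)\<^sup>2"
    using pi_less_4 by (simp add: power2_eq_square field_simps flip: power_mult_distrib)
  ultimately show ?thesis
    by linarith
qed

end

theorem snowflake_embedding_circle:
  "cmod (cis a - cis b) / 196 \<le> (\<Sum>m<6. (cmod (snowflake_coord m a - snowflake_coord m b))\<^sup>2)"
  "(\<Sum>m<6. (cmod (snowflake_coord m a - snowflake_coord m b))\<^sup>2) \<le> 288 * cmod (cis a - cis b)"
proof -
  obtain x where "0 \<le> x" "x \<le> pi"
    "\<And>n::nat. cmod (cis (n * a) - cis (n * b)) = 2 * \<bar>sin (n * x / 2)\<bar>"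
    using exists_reduced_angle[of a b] by blast
  then show "cmod (cis a - cis b) / 196 \<le>
      (\<Sum>m<6. (cmod (snowflake_coord m a - snowflake_coord m b))\<^sup>2)"
    and "(\<Sum>m<6. (cmod (snowflake_coord m a - snowflake_coord m b))\<^sup>2) \<le>
      288 * cmod (cis a - cis b)"
    by (blast intro: snowflake_coords_lower snowflake_coords_upper)+
qed

section \<open>Estimates in the complex plane\<close>

lemma norm_unimodular_diff_le_Im_rotated:
  fixes \<rho> :: complex and \<beta> :: real
  assumes "cmod \<rho> = 1" "- 1/2 \<le> Re \<rho>" "9/10 \<le> cos \<beta>" "\<bar>sin \<beta>\<bar> \<le> 1/16"
  shows "cmod (\<rho> - 1) \<le> 4 * \<bar>Im ((\<rho> - 1) * cis \<beta>)\<bar>"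
proof -
  define p q c where "p = Re \<rho>" and "q = Im \<rho>" and "c = cmod (\<rho> - 1)"
  have pq: "p\<^sup>2 + q\<^sup>2 = 1"
    using assms(1) cmod_power2[of \<rho>] unfolding p_def q_def by simp
  have c_sq: "c\<^sup>2 = 2 * (1 - p)"
    using pq unfolding c_def cmod_power2 p_def q_def by (simp add: power2_eq_square algebra_simps)
  have "c \<le> 2"
    using c_def norm_triangle_ineq4[of \<rho> 1] assms(1) by simp
  then have "1 - p \<le> c"
    using c_sq c_def mult_right_mono[of c 2 c] by (simp add: power2_eq_square)
  have "0 \<le> 1 - p"
    using c_sq zero_le_power2[of c] by (simp only:) simp
  have "q\<^sup>2 = (1 - p) * (1 + p)"
    using pq by (simp add: power2_eq_square algebra_simps)
  also have "\<dots> \<ge> (1 - p) * (1/2)"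
    using assms(2) \<open>0 \<le> 1 - p\<close> unfolding p_def by (intro mult_left_mono) auto
  finally have "(c / 2)\<^sup>2 \<le> q\<^sup>2"
    using c_sq by (simp add: power2_eq_square)
  then have "c / 2 \<le> \<bar>q\<bar>"
    using abs_le_square_iff[of "c / 2" q] c_def by simp
  have "Im ((\<rho> - 1) * cis \<beta>) = q * cos \<beta> - (1 - p) * sin \<beta>"
    unfolding p_def q_def by (simp add: algebra_simps)
  moreover have "c / 2 * (9/10) \<le> \<bar>q\<bar> * cos \<beta>"
    using \<open>c / 2 \<le> \<bar>q\<bar>\<close> assms(3) c_def by (intro mult_mono) auto
  moreover have "\<bar>(1 - p) * sin \<beta>\<bar> \<le> c * (1/16)"
    unfolding abs_mult using \<open>1 - p \<le> c\<close> \<open>0 \<le> 1 - p\<close> assms(4) by (intro mult_mono) auto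
  ultimately have "c / 4 \<le> \<bar>Im ((\<rho> - 1) * cis \<beta>)\<bar>"
    using assms(3) by (auto simp: abs_if split: if_splits)
  then show ?thesis
    unfolding c_def by simp
qed

lemma unimodular_rotation_dichotomy:
  fixes \<rho> :: complex and \<beta> :: real
  assumes "cmod \<rho> = 1" "\<bar>\<beta>\<bar> \<le> 1/16"
  shows "cmod (\<rho> - 1) \<le> 4 * \<bar>Im ((\<rho> - 1) * cis \<beta>)\<bar> \<or> Re (\<rho> * cis \<beta>) \<le> 0"
proof -
  have "1 - cos \<beta> \<le> (1/16)\<^sup>2 / 2"
    using one_minus_cos_le[of \<beta>] power_mono[of "\<bar>\<beta>\<bar>" "1/16" 2] assms(2) by simp
  then have cos: "9/10 \<le> cos \<beta>"
    by (simp add: power2_eq_square)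
  have sin: "\<bar>sin \<beta>\<bar> \<le> 1/16"
    using abs_sin_x_le_abs_x[of \<beta>] assms(2) by linarith
  show ?thesis
  proof (cases "- 1/2 \<le> Re \<rho>")
    case True
    show ?thesis
      using norm_unimodular_diff_le_Im_rotated[OF assms(1) True cos sin] ..
  next
    case False
    have "(Re \<rho>)\<^sup>2 + (Im \<rho>)\<^sup>2 = 1"
      using assms(1) cmod_power2[of \<rho>] by simp
    then have "(Im \<rho>)\<^sup>2 \<le> 1"
      using zero_le_power2[of "Re \<rho>"] by linarith
    then have "\<bar>Im \<rho>\<bar> \<le> 1"
      using abs_le_square_iff[of "Im \<rho>" 1] by simp
    then have "\<bar>Im \<rho> * sin \<beta>\<bar> \<le> 1 * (1/16)"
      unfolding abs_mult using sin by (intro mult_mono) auto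
    moreover have "Re \<rho> * cos \<beta> \<le> - 1/2 * (9/10)"
      using False cos mult_right_mono[of "Re \<rho>" "- 1/2" "cos \<beta>"] by simp
    ultimately have "Re (\<rho> * cis \<beta>) \<le> 0"
      by (simp add: abs_le_iff)
    then show ?thesis ..
  qed
qed

lemma power2_norm_le_of_norm_diff_le:
  fixes x y :: "'a::real_normed_vector"
  assumes "norm (x - y) \<le> e"
  shows "(norm x)\<^sup>2 \<le> 2 * (norm y)\<^sup>2 + 2 * e\<^sup>2"
proof -
  have "norm x \<le> norm y + e"
    using norm_triangle_ineq2[of x y] assms by simp
  then have "(norm x)\<^sup>2 \<le> (norm y + e)\<^sup>2"
    by (rule power_mono) simp
  also have "\<dots> \<le> 2 * (norm y)\<^sup>2 + 2 * e\<^sup>2"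
    using zero_le_power2[of "norm y - e"] by (simp add: power2_eq_square algebra_simps)
  finally show ?thesis .
qed

lemma
  fixes u v :: complex
  assumes "0 \<le> r" "r \<le> r'" "cmod u \<le> 2"
  shows norm_scaled_diff_le: "(cmod (of_real r * u - of_real r' * v))\<^sup>2 \<le>
      2 * r'\<^sup>2 * (cmod (u - v))\<^sup>2 + 8 * (r' - r)\<^sup>2"
    and norm_scaled_diff_ge: "r'\<^sup>2 * (cmod (u - v))\<^sup>2 \<le>
      2 * (cmod (of_real r * u - of_real r' * v))\<^sup>2 + 8 * (r' - r)\<^sup>2"
proof -
  have "(of_real r * u - of_real r' * v) - of_real r' * (u - v) = of_real (r - r') * u"
    by (simp add: algebra_simps)
  then have "cmod ((of_real r * u - of_real r' * v) - of_real r' * (u - v)) = (r' - r) * cmod u"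
    using assms by (simp add: norm_mult del: of_real_diff)
  also have "\<dots> \<le> (r' - r) * 2"
    using assms by (intro mult_left_mono) auto
  finally have close:
      "cmod ((of_real r * u - of_real r' * v) - of_real r' * (u - v)) \<le> 2 * (r' - r)"
    by simp
  have scale: "(cmod (of_real r' * (u - v)))\<^sup>2 = r'\<^sup>2 * (cmod (u - v))\<^sup>2"
    using assms by (simp add: norm_mult power_mult_distrib)
  have err: "2 * (2 * (r' - r))\<^sup>2 = 8 * (r' - r)\<^sup>2"
    by (simp only: power_mult_distrib) simp
  show "(cmod (of_real r * u - of_real r' * v))\<^sup>2 \<le> 2 * r'\<^sup>2 * (cmod (u - v))\<^sup>2 + 8 * (r' - r)\<^sup>2"
    using power2_norm_le_of_norm_diff_le[OF close, unfolded scale err] by (simp add: mult.assoc)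
  show "r'\<^sup>2 * (cmod (u - v))\<^sup>2 \<le> 2 * (cmod (of_real r * u - of_real r' * v))\<^sup>2 + 8 * (r' - r)\<^sup>2"
    using power2_norm_le_of_norm_diff_le[OF close[unfolded norm_minus_commute],
        unfolded scale err] .
qed

lemma norm_le_norm_diff_if_Re_cnj_mult_nonpos:
  fixes z w :: complex
  assumes "Re (cnj z * w) \<le> 0"
  shows "cmod z \<le> cmod (z - w)"
proof -
  have "z \<bullet> w \<le> 0"
    using assms by (simp add: inner_complex_def)
  then have "(cmod z)\<^sup>2 + (cmod w)\<^sup>2 \<le> (cmod (z - w))\<^sup>2"
    using dot_norm_neg[of z w] by simp
  then have "(cmod z)\<^sup>2 \<le> (cmod (z - w))\<^sup>2"
    by (rule order_trans[rotated]) simp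
  then show ?thesis
    by simp
qed

section \<open>The vertical gap and bi-Lipschitz embeddings\<close>

definition vertical_gap :: "(real \<Rightarrow> real) \<Rightarrow> complex \<Rightarrow> complex \<Rightarrow> real" where
  "vertical_gap F z w = F (cmod z) - F (cmod w) + Im (cnj z * w) / 2"

lemma vertical_gap_swap: "vertical_gap F w z = - vertical_gap F z w"
proof -
  have "Im (cnj w * z) = - Im (cnj z * w)"
    by (simp add: algebra_simps)
  then show ?thesis
    unfolding vertical_gap_def by linarith
qed

lemma dH_rot_graph_points:
  "dH (x, y, F (sqrt (x\<^sup>2 + y\<^sup>2))) (x', y', F (sqrt (x'\<^sup>2 + y'\<^sup>2))) =
    \<bar>x - x'\<bar> + \<bar>y - y'\<bar> + sqrt \<bar>vertical_gap F (Complex x y) (Complex x' y')\<bar>"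
  unfolding dH_def vertical_gap_def by (simp add: complex_norm algebra_simps diff_divide_distrib)

lemma bilip_embeds_Rn_subset:
  assumes "bilip_embeds_Rn B d n" "A \<subseteq> B"
  shows "bilip_embeds_Rn A d n"
  using assms unfolding bilip_embeds_Rn_def by blast

lemma bilip_embeds_Rn_complexI:
  fixes f :: "'a \<Rightarrow> nat \<Rightarrow> complex"
  assumes "1 \<le> L"
    and "\<And>a b. a \<in> A \<Longrightarrow> b \<in> A \<Longrightarrow> d a b / L \<le> sqrt (\<Sum>j<N. (cmod (f a j - f b j))\<^sup>2)"
    and "\<And>a b. a \<in> A \<Longrightarrow> b \<in> A \<Longrightarrow> sqrt (\<Sum>j<N. (cmod (f a j - f b j))\<^sup>2) \<le> L * d a b"
  shows "bilip_embeds_Rn A d (2 * N)"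
proof -
  define g where "g a i =
    (if i < 2 * N then if even i then Re (f a (i div 2)) else Im (f a (i div 2)) else 0)" for a i
  have "(\<Sum>i<2 * N. (g a i - g b i)\<^sup>2) = (\<Sum>j<N. (cmod (f a j - f b j))\<^sup>2)" for a b
  proof -
    have "(\<Sum>i<2 * N. (g a i - g b i)\<^sup>2) = (\<Sum>i<2 * N.
        if even i then (Re (f a (i div 2)) - Re (f b (i div 2)))\<^sup>2
        else (Im (f a (i div 2)) - Im (f b (i div 2)))\<^sup>2)"
      unfolding g_def by (intro sum.cong) auto
    also have "\<dots> = (\<Sum>j<N. (Re (f a j) - Re (f b j))\<^sup>2) + (\<Sum>j<N. (Im (f a j) - Im (f b j))\<^sup>2)"
      by (simp only: sum_split_even_odd) simp
    finally show ?thesis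
      by (simp add: cmod_power2 sum.distrib)
  qed
  then show ?thesis
    unfolding bilip_embeds_Rn_def
  proof (intro exI[of _ L] conjI exI[of _ g] ballI)
    show "\<forall>i\<ge>2 * N. g a i = 0" for a
      by (simp add: g_def)
  qed (use assms in simp_all)
qed

lemma sqrt_comparable_sum:
  fixes u v P G C :: real
  assumes "0 \<le> u" "0 \<le> v" "0 \<le> G" "0 \<le> C"
    and "\<bar>P\<bar> \<le> C * (u\<^sup>2 + v\<^sup>2 + G)" "G \<le> C * (u\<^sup>2 + v\<^sup>2 + \<bar>P\<bar>)"
  shows "(u + v + sqrt \<bar>P\<bar>) / sqrt (3 * (1 + C)) \<le> sqrt (u\<^sup>2 + v\<^sup>2 + G)"
    and "sqrt (u\<^sup>2 + v\<^sup>2 + G) \<le> sqrt (3 * (1 + C)) * (u + v + sqrt \<bar>P\<bar>)"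
proof -
  obtain c s Q where c: "c = sqrt \<bar>P\<bar>" and s: "s = u + v + c" and Q: "Q = u\<^sup>2 + v\<^sup>2"
    by simp
  have "0 \<le> c" "c\<^sup>2 = \<bar>P\<bar>" "0 \<le> s" "0 \<le> Q"
    using assms c s Q by simp_all
  have "Q + \<bar>P\<bar> \<le> s\<^sup>2" "s\<^sup>2 \<le> 3 * (Q + \<bar>P\<bar>)"
    using assms \<open>0 \<le> c\<close> \<open>c\<^sup>2 = \<bar>P\<bar>\<close> zero_le_power2[of "u - v"] zero_le_power2[of "u - c"]
      zero_le_power2[of "v - c"] unfolding s Q by (simp_all add: power2_eq_square algebra_simps)
  moreover have "Q + \<bar>P\<bar> \<le> (1 + C) * (Q + G)" "Q + G \<le> (1 + C) * (Q + \<bar>P\<bar>)"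
    using assms \<open>0 \<le> Q\<close> mult_left_mono[of 0 "Q + G" C] mult_left_mono[of 0 "Q + \<bar>P\<bar>" C]
    unfolding Q by (simp_all add: algebra_simps)
  moreover have "(1 + C) * (Q + \<bar>P\<bar>) \<le> (1 + C) * s\<^sup>2"
    using \<open>Q + \<bar>P\<bar> \<le> s\<^sup>2\<close> assms by (intro mult_left_mono) auto
  moreover have "(1 + C) * s\<^sup>2 \<le> 3 * (1 + C) * s\<^sup>2"
    using assms by (intro mult_right_mono) auto
  moreover have "3 * (Q + \<bar>P\<bar>) \<le> 3 * (1 + C) * (Q + G)"
    using mult_left_mono[OF \<open>Q + \<bar>P\<bar> \<le> (1 + C) * (Q + G)\<close>, of 3]
    by (simp only: mult.assoc)
  ultimately have "s\<^sup>2 \<le> 3 * (1 + C) * (Q + G)" "Q + G \<le> 3 * (1 + C) * s\<^sup>2"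
    by linarith+
  then have "sqrt (s\<^sup>2) \<le> sqrt (3 * (1 + C)) * sqrt (Q + G)"
    "sqrt (Q + G) \<le> sqrt (3 * (1 + C)) * sqrt (s\<^sup>2)"
    by (simp_all only: real_sqrt_le_mono flip: real_sqrt_mult)
  then have "s \<le> sqrt (3 * (1 + C)) * sqrt (Q + G)" "sqrt (Q + G) \<le> sqrt (3 * (1 + C)) * s"
    using \<open>0 \<le> s\<close> by simp_all
  then show "(u + v + sqrt \<bar>P\<bar>) / sqrt (3 * (1 + C)) \<le> sqrt (u\<^sup>2 + v\<^sup>2 + G)"
    and "sqrt (u\<^sup>2 + v\<^sup>2 + G) \<le> sqrt (3 * (1 + C)) * (u + v + sqrt \<bar>P\<bar>)"
    using assms unfolding s c Q by (simp_all add: divide_le_eq mult.commute)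
qed

section \<open>The twisted snowflake map of a flat C11 profile\<close>

locale C11_flat_profile =
  fixes F F' :: "real \<Rightarrow> real" and K :: real
  assumes K_ge_1: "1 \<le> K"
    and has_deriv: "\<And>t. 0 \<le> t \<Longrightarrow> (F has_real_derivative F' t) (at t within {0..})"
    and deriv_lipschitz: "\<And>s t. 0 \<le> s \<Longrightarrow> 0 \<le> t \<Longrightarrow> \<bar>F' s - F' t\<bar> \<le> K * \<bar>s - t\<bar>"
    and deriv_0: "F' 0 = 0"

lemma C11_flat_at_0_imp_profile:
  assumes "C11_flat_at_0 F"
  obtains F' K where "C11_flat_profile F F' K"
proof -
  obtain F' K where deriv: "\<And>t. 0 \<le> t \<Longrightarrow> (F has_real_derivative F' t) (at t within {0..})"
    and lip: "\<And>s t. 0 \<le> s \<Longrightarrow> 0 \<le> t \<Longrightarrow> \<bar>F' s - F' t\<bar> \<le> K * \<bar>s - t\<bar>"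
    and "F' 0 = 0"
    using assms unfolding C11_flat_at_0_def by blast
  have "\<bar>F' s - F' t\<bar> \<le> max K 1 * \<bar>s - t\<bar>" if "0 \<le> s" "0 \<le> t" for s t
    using lip[OF that] mult_right_mono[of K "max K 1" "\<bar>s - t\<bar>"] by simp
  then have "C11_flat_profile F F' (max K 1)"
    using deriv \<open>F' 0 = 0\<close> by unfold_locales auto
  then show thesis
    by (rule that)
qed

context C11_flat_profile
begin

lemma abs_deriv_le: "0 \<le> t \<Longrightarrow> \<bar>F' t\<bar> \<le> K * t"
  using deriv_lipschitz[of t 0] deriv_0 by simp

lemma continuous_on_deriv: "continuous_on {0..} F'"
proof (rule lipschitz_on_continuous_on)
  show "K-lipschitz_on {0..} F'"
    by (rule lipschitz_onI) (use deriv_lipschitz K_ge_1 in \<open>auto simp: dist_real_def\<close>)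
qed

lemma has_deriv_at: "0 < t \<Longrightarrow> (F has_real_derivative F' t) (at t)"
  using has_deriv[of t] at_within_interior[of t "{0..}"] by simp

lemma profile_diff_le:
  assumes "0 \<le> r" "r \<le> s"
  shows "\<bar>F s - F r\<bar> \<le> K * s * (s - r)"
proof (cases "r = s")
  case False
  then have "r < s"
    using assms by simp
  have "continuous_on {r..s} F"
    using DERIV_continuous_on[OF has_deriv] assms by (auto intro: continuous_on_subset)
  moreover have "F differentiable (at t)" if "r < t" "t < s" for t
    using has_deriv_at[of t] that assms by (auto simp: real_differentiable_def)
  ultimately obtain l t where t: "r < t" "t < s" "(F has_real_derivative l) (at t)"
    and mvt: "F s - F r = (s - r) * l"
    using MVT[OF \<open>r < s\<close>] by blast
  have "l = F' t"
    using DERIV_unique[OF t(3) has_deriv_at] t assms by simp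
  moreover have "K * t \<le> K * s"
    using t K_ge_1 by (intro mult_left_mono) auto
  ultimately have "\<bar>l\<bar> \<le> K * s"
    using abs_deriv_le[of t] t assms by simp
  then have "(s - r) * \<bar>l\<bar> \<le> (s - r) * (K * s)"
    using \<open>r < s\<close> by (intro mult_left_mono) auto
  moreover have "\<bar>F s - F r\<bar> = (s - r) * \<bar>l\<bar>"
    using mvt \<open>r < s\<close> by (simp add: abs_mult)
  ultimately show ?thesis
    by (simp add: algebra_simps)
qed simp

definition twist_rate :: "real \<Rightarrow> real" where
  "twist_rate t = 2 * F' t / t\<^sup>2"

definition twist :: "real \<Rightarrow> real" where
  "twist t = integral {1..t} twist_rate - integral {t..1} twist_rate"

lemma twist_rate_integrable: "0 < a \<Longrightarrow> twist_rate integrable_on {a..b}"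
  unfolding twist_rate_def
  by (intro integrable_continuous_interval continuous_intros
      continuous_on_subset[OF continuous_on_deriv]) auto

lemma twist_eq_integral_from:
  assumes "0 < a" "a \<le> 1" "a \<le> s"
  shows "twist s = integral {a..s} twist_rate - integral {a..1} twist_rate"
proof (cases "1 \<le> s")
  case True
  have "integral {a..1} twist_rate + integral {1..s} twist_rate = integral {a..s} twist_rate"
    using True assms
    by (intro Henstock_Kurzweil_Integration.integral_combine twist_rate_integrable) auto
  moreover have "integral {s..1} twist_rate = 0"
    using True by (cases "s = 1") auto
  ultimately show ?thesis
    unfolding twist_def by simp
next
  case False
  have "integral {a..s} twist_rate + integral {s..1} twist_rate = integral {a..1} twist_rate"
    using False assms
    by (intro Henstock_Kurzweil_Integration.integral_combine twist_rate_integrable) auto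
  then show ?thesis
    using False unfolding twist_def by simp
qed

lemma twist_has_deriv:
  assumes "0 < t"
  shows "(twist has_real_derivative twist_rate t) (at t)"
proof -
  define a b where "a = min t 1 / 2" and "b = max t 1 + 1"
  have ab: "0 < a" "a < t" "a < 1" "t < b"
    using assms unfolding a_def b_def by auto
  have "((\<lambda>s. integral {a..s} twist_rate) has_real_derivative twist_rate t) (at t within {a..b})"
    using ab unfolding twist_rate_def
    by (intro integral_has_real_derivative continuous_intros
        continuous_on_subset[OF continuous_on_deriv]) auto
  then have "((\<lambda>s. integral {a..s} twist_rate - integral {a..1} twist_rate)
      has_real_derivative twist_rate t) (at t)"
    using at_within_Icc_at[of a t b] ab by (auto intro!: derivative_eq_intros)
  then show ?thesis
    by (rule has_field_derivative_transform_within_open[where S = "{a<..<b}"])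
      (use ab twist_eq_integral_from in auto)
qed

lemma twist_diff_le:
  assumes "0 < r" "r \<le> s"
  shows "\<bar>twist s - twist r\<bar> \<le> 2 * K * (s - r) / r"
proof (cases "r = s")
  case False
  then have "r < s"
    using assms by simp
  then obtain t where t: "r < t" "t < s" and mvt: "twist s - twist r = (s - r) * twist_rate t"
    using MVT2[of r s twist twist_rate] twist_has_deriv assms by force
  have "\<bar>twist_rate t\<bar> = 2 * \<bar>F' t\<bar> / t\<^sup>2"
    unfolding twist_rate_def by (simp add: abs_mult)
  also have "\<dots> \<le> 2 * (K * t) / t\<^sup>2"
    using abs_deriv_le[of t] t assms by (simp add: divide_right_mono)
  also have "\<dots> = 2 * K / t"
    using t assms by (simp add: power2_eq_square)
  also have "\<dots> \<le> 2 * K / r"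
    using t assms K_ge_1 by (simp add: divide_left_mono)
  finally have "(s - r) * \<bar>twist_rate t\<bar> \<le> (s - r) * (2 * K / r)"
    using \<open>r < s\<close> by (intro mult_left_mono) auto
  then show ?thesis
    using mvt \<open>r < s\<close> by (simp add: abs_mult mult_ac)
qed simp

text \<open>Since \<open>twist' = 2 F' / t\<^sup>2\<close>, the derivative of \<open>r t sin (twist t - twist r) / 2\<close>
  at \<open>t = r\<close> is \<open>F' r\<close>; so \<open>twist_defect r\<close> vanishes to second order at \<open>r\<close>.\<close>

definition twist_defect :: "real \<Rightarrow> real \<Rightarrow> real" where
  "twist_defect r t = F t - F r - r * t / 2 * sin (twist t - twist r)"

definition twist_defect_deriv :: "real \<Rightarrow> real \<Rightarrow> real" where
  "twist_defect_deriv r t = F' t - r / 2 * sin (twist t - twist r)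
    - r * t / 2 * cos (twist t - twist r) * twist_rate t"

lemma twist_defect_has_deriv:
  "0 < t \<Longrightarrow> (twist_defect r has_real_derivative twist_defect_deriv r t) (at t)"
  unfolding twist_defect_def twist_defect_deriv_def
  by (rule derivative_eq_intros has_deriv_at twist_has_deriv refl | simp)+

lemma twist_defect_deriv_eq:
  assumes "0 < t"
  shows "twist_defect_deriv r t = F' t * ((t - r) / t + r / t * (1 - cos (twist t - twist r)))
    - r / 2 * sin (twist t - twist r)"
  unfolding twist_defect_deriv_def twist_rate_def using assms
  by (simp add: field_simps power2_eq_square)

lemma abs_twist_defect_deriv_le:
  assumes "0 < r" "r \<le> t" "t \<le> 2 * r"
  shows "\<bar>twist_defect_deriv r t\<bar> \<le> (2 * K + 2 * K ^ 3) * (t - r)"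
proof -
  define \<beta> d where "\<beta> = twist t - twist r" and "d = t - r"
  have "0 < t" "0 \<le> d" "d / r \<le> 1"
    using assms unfolding d_def by auto
  have \<beta>: "\<bar>\<beta>\<bar> \<le> 2 * K * d / r"
    unfolding \<beta>_def d_def using assms(1,2) by (rule twist_diff_le)
  then have "\<beta>\<^sup>2 \<le> (2 * K * d / r)\<^sup>2"
    by (metis abs_ge_zero power2_abs power_mono)
  have "\<bar>F' t * (d / t + r / t * (1 - cos \<beta>))\<bar> \<le> K * t * (d / t + r / t * (1 - cos \<beta>))"
    using abs_deriv_le[of t] \<open>0 < t\<close> \<open>0 \<le> d\<close> assms by (simp add: abs_mult mult_right_mono)
  also have "\<dots> = K * d + K * r * (1 - cos \<beta>)"
    using \<open>0 < t\<close> by (simp add: field_simps)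
  also have "K * r * (1 - cos \<beta>) \<le> K * r * ((2 * K * d / r)\<^sup>2 / 2)"
    using one_minus_cos_le[of \<beta>] \<open>\<beta>\<^sup>2 \<le> _\<close> K_ge_1 assms by (intro mult_left_mono) auto
  also have "\<dots> = 2 * K ^ 3 * d * (d / r)"
    using assms by (simp add: power2_eq_square power3_eq_cube field_simps)
  also have "\<dots> \<le> 2 * K ^ 3 * d"
    using mult_left_mono[OF \<open>d / r \<le> 1\<close>, of "2 * K ^ 3 * d"] \<open>0 \<le> d\<close> K_ge_1 by simp
  finally have radial: "\<bar>F' t * (d / t + r / t * (1 - cos \<beta>))\<bar> \<le> K * d + 2 * K ^ 3 * d"
    by simp
  have "r / 2 * \<bar>sin \<beta>\<bar> \<le> r / 2 * (2 * K * d / r)"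
    using abs_sin_x_le_abs_x[of \<beta>] \<beta> assms by (intro mult_left_mono) auto
  then have angular: "\<bar>r / 2 * sin \<beta>\<bar> \<le> K * d"
    using assms by (simp add: abs_mult)
  have "\<bar>twist_defect_deriv r t\<bar> \<le> \<bar>F' t * (d / t + r / t * (1 - cos \<beta>))\<bar> + \<bar>r / 2 * sin \<beta>\<bar>"
    unfolding twist_defect_deriv_eq[OF \<open>0 < t\<close>] \<beta>_def[symmetric] d_def[symmetric]
    by (rule abs_triangle_ineq4)
  also have "\<dots> \<le> (K * d + 2 * K ^ 3 * d) + K * d"
    using radial angular by (rule add_mono)
  also have "\<dots> = (2 * K + 2 * K ^ 3) * (t - r)"
    unfolding d_def by (simp add: algebra_simps)
  finally show ?thesis .
qed

lemma abs_twist_defect_le: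
  assumes "0 < r" "r \<le> s" "s \<le> 2 * r"
  shows "\<bar>twist_defect r s\<bar> \<le> (2 * K + 2 * K ^ 3) * (s - r)\<^sup>2"
proof (cases "r = s")
  case True
  then show ?thesis
    by (simp add: twist_defect_def)
next
  case False
  then have "r < s"
    using assms by simp
  then obtain t where t: "r < t" "t < s"
    and mvt: "twist_defect r s - twist_defect r r = (s - r) * twist_defect_deriv r t"
    using MVT2[of r s "twist_defect r" "twist_defect_deriv r"] twist_defect_has_deriv assms
    by force
  have "\<bar>twist_defect_deriv r t\<bar> \<le> (2 * K + 2 * K ^ 3) * (t - r)"
    using t assms by (intro abs_twist_defect_deriv_le) auto
  also have "\<dots> \<le> (2 * K + 2 * K ^ 3) * (s - r)"
    using t K_ge_1 by (intro mult_left_mono) auto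
  finally have "(s - r) * \<bar>twist_defect_deriv r t\<bar> \<le> (s - r) * ((2 * K + 2 * K ^ 3) * (s - r))"
    using \<open>r < s\<close> by (intro mult_left_mono) auto
  moreover have "twist_defect r r = 0"
    by (simp add: twist_defect_def)
  ultimately show ?thesis
    using mvt \<open>r < s\<close> by (simp add: abs_mult power2_eq_square mult_ac)
qed

definition untwisted_dir :: "complex \<Rightarrow> complex" where
  "untwisted_dir z = sgn z * cis (- twist (cmod z))"

definition graph_coord :: "nat \<Rightarrow> complex \<Rightarrow> complex" where
  "graph_coord m z = of_real (cmod z) * snowflake_coord m (Arg (untwisted_dir z))"

definition graph_sqdist :: "complex \<Rightarrow> complex \<Rightarrow> real" where
  "graph_sqdist z w = (\<Sum>m<6. (cmod (graph_coord m z - graph_coord m w))\<^sup>2)"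

lemma graph_sqdist_swap: "graph_sqdist w z = graph_sqdist z w"
  unfolding graph_sqdist_def by (simp add: norm_minus_commute)

lemma graph_sqdist_nonneg: "0 \<le> graph_sqdist z w"
  unfolding graph_sqdist_def by (simp add: sum_nonneg)

lemma norm_untwisted_dir: "z \<noteq> 0 \<Longrightarrow> cmod (untwisted_dir z) = 1"
  unfolding untwisted_dir_def by (simp add: norm_mult norm_sgn)

lemma norm_untwisted_dir_diff_le: "cmod (untwisted_dir z - untwisted_dir w) \<le> 2"
  using norm_triangle_ineq4[of "untwisted_dir z" "untwisted_dir w"]
  unfolding untwisted_dir_def by (simp add: norm_mult norm_sgn split: if_splits)

lemma cis_Arg_untwisted_dir:
  assumes "z \<noteq> 0"
  shows "cis (Arg (untwisted_dir z)) = untwisted_dir z"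
proof -
  have "untwisted_dir z \<noteq> 0"
    using norm_untwisted_dir[OF assms] by auto
  then show ?thesis
    using cis_Arg[of "untwisted_dir z"] norm_untwisted_dir[OF assms] by (simp add: sgn_div_norm)
qed

lemma untwisted_polar: "z = of_real (cmod z) * untwisted_dir z * cis (twist (cmod z))"
  unfolding untwisted_dir_def
  by (simp add: mult.assoc cis_mult sgn_eq flip: mult.assoc[of _ "sgn z"])

lemma cnj_mult_untwisted:
  "cnj z * w = of_real (cmod z * cmod w) * (cnj (untwisted_dir z) * untwisted_dir w) *
    cis (twist (cmod w) - twist (cmod z))"
proof -
  have "cnj z * w = of_real (cmod z) * cnj (untwisted_dir z) * cis (- twist (cmod z)) *
      (of_real (cmod w) * untwisted_dir w * cis (twist (cmod w)))"
    by (subst (1 2) untwisted_polar) (simp add: cis_cnj)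
  also have "\<dots> = of_real (cmod z * cmod w) * (cnj (untwisted_dir z) * untwisted_dir w) *
      (cis (- twist (cmod z)) * cis (twist (cmod w)))"
    by (simp add: mult_ac)
  also have "cis (- twist (cmod z)) * cis (twist (cmod w)) = cis (twist (cmod w) - twist (cmod z))"
    by (simp add: cis_mult)
  finally show ?thesis .
qed

lemma norm_graph_coord_le: "cmod (graph_coord m z) \<le> 2 * cmod z"
  unfolding graph_coord_def norm_mult
  using mult_left_mono[OF norm_snowflake_coord_le, of "cmod z"] by (simp add: mult.commute)

lemma abs_vertical_gap_le:
  assumes "cmod z \<le> cmod w"
  shows "\<bar>vertical_gap F z w\<bar> \<le> 2 * K * (cmod w)\<^sup>2"
proof -
  obtain r r' where r: "r = cmod z" "r' = cmod w"
    by simp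
  have "\<bar>F r' - F r\<bar> \<le> K * r' * (r' - r)"
    by (rule profile_diff_le) (use assms r in simp_all)
  also have "\<dots> \<le> K * r' * r'"
    using K_ge_1 r by (intro mult_left_mono) auto
  finally have "\<bar>F r - F r'\<bar> \<le> K * r'\<^sup>2"
    by (simp add: power2_eq_square abs_minus_commute)
  moreover have "\<bar>Im (cnj z * w)\<bar> \<le> r'\<^sup>2"
    using abs_Im_le_cmod[of "cnj z * w"] assms mult_right_mono[of r r' r'] r
    by (simp add: norm_mult power2_eq_square)
  moreover have "r'\<^sup>2 \<le> K * r'\<^sup>2"
    using K_ge_1 mult_right_mono[of 1 K "r'\<^sup>2"] by simp
  moreover have "\<bar>vertical_gap F z w\<bar> \<le> \<bar>F r - F r'\<bar> + \<bar>Im (cnj z * w) / 2\<bar>"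
    unfolding vertical_gap_def r by (rule abs_triangle_ineq)
  ultimately have "\<bar>vertical_gap F z w\<bar> \<le> K * r'\<^sup>2 + r'\<^sup>2 / 2"
    by simp
  also have "\<dots> \<le> K * r'\<^sup>2 + K * r'\<^sup>2"
    using \<open>r'\<^sup>2 \<le> K * r'\<^sup>2\<close> zero_le_power2[of r'] by linarith
  finally show ?thesis
    using r by simp
qed

lemma graph_sqdist_le:
  assumes "cmod z \<le> cmod w"
  shows "graph_sqdist z w \<le> 96 * (cmod w)\<^sup>2"
proof -
  have "(cmod (graph_coord m z - graph_coord m w))\<^sup>2 \<le> (4 * cmod w)\<^sup>2" for m
  proof (rule power_mono)
    show "cmod (graph_coord m z - graph_coord m w) \<le> 4 * cmod w"
      using norm_triangle_ineq4[of "graph_coord m z" "graph_coord m w"]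
        norm_graph_coord_le[of m z] norm_graph_coord_le[of m w] assms by linarith
  qed simp
  then have "graph_sqdist z w \<le> (\<Sum>m<6::nat. (4 * cmod w)\<^sup>2)"
    unfolding graph_sqdist_def by (intro sum_mono)
  then show ?thesis
    by (simp add: power_mult_distrib)
qed

lemma far_scale:
  assumes "cmod z \<le> cmod w" "cmod w \<le> 64 * K * (cmod w - cmod z)"
  shows "(cmod w)\<^sup>2 \<le> (64 * K)\<^sup>2 * (cmod (z - w))\<^sup>2"
proof -
  have "cmod w - cmod z \<le> cmod (z - w)"
    using norm_triangle_ineq2[of w z] by (simp add: norm_minus_commute)
  then have "cmod w \<le> 64 * K * cmod (z - w)"
    using assms K_ge_1 mult_left_mono[of "cmod w - cmod z" "cmod (z - w)" "64 * K"] by linarith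
  then have "(cmod w)\<^sup>2 \<le> (64 * K * cmod (z - w))\<^sup>2"
    by (rule power_mono) simp
  then show ?thesis
    by (simp add: power_mult_distrib)
qed

lemma near_scales:
  assumes "cmod z \<le> cmod w" "64 * K * (cmod w - cmod z) < cmod w"
  shows "0 < cmod z" "cmod w \<le> 2 * cmod z" "\<bar>twist (cmod w) - twist (cmod z)\<bar> \<le> 1/16"
proof -
  obtain r r' where r: "r = cmod z" "r' = cmod w"
    by simp
  have "r \<le> r'" "0 \<le> r'" "64 * (K * (r' - r)) < r'"
    using assms r by (auto simp: mult.assoc)
  moreover have "r' - r \<le> K * (r' - r)"
    using \<open>r \<le> r'\<close> K_ge_1 mult_right_mono[of 1 K "r' - r"] by simp
  ultimately have "0 < r \<and> r' \<le> 2 * r"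
    by linarith
  then have "0 < r" "r' \<le> 2 * r"
    by auto
  have "\<bar>twist r' - twist r\<bar> \<le> 2 * K * (r' - r) / r"
    using \<open>0 < r\<close> \<open>r \<le> r'\<close> by (rule twist_diff_le)
  also have "\<dots> \<le> 1/16"
    using \<open>64 * (K * (r' - r)) < r'\<close> \<open>0 < r\<close> \<open>r' \<le> 2 * r\<close> by (simp add: field_simps)
  finally show "0 < cmod z" "cmod w \<le> 2 * cmod z" "\<bar>twist (cmod w) - twist (cmod z)\<bar> \<le> 1/16"
    using \<open>0 < r\<close> \<open>r' \<le> 2 * r\<close> r by simp_all
qed

lemma vertical_gap_eq_twist_defect:
  "vertical_gap F z w = cmod z * cmod w *
      Im ((cnj (untwisted_dir z) * untwisted_dir w - 1) * cis (twist (cmod w) - twist (cmod z))) / 2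
    - twist_defect (cmod z) (cmod w)"
proof -
  define \<rho> \<beta> where "\<rho> = cnj (untwisted_dir z) * untwisted_dir w"
    and "\<beta> = twist (cmod w) - twist (cmod z)"
  obtain X where X: "Im (\<rho> * cis \<beta>) = X"
    by simp
  have "Im (cnj z * w) = cmod z * cmod w * X"
    unfolding X[symmetric] \<rho>_def \<beta>_def by (subst cnj_mult_untwisted) (simp add: mult.assoc)
  moreover have "Im ((\<rho> - 1) * cis \<beta>) = X - sin \<beta>"
    unfolding X[symmetric] by (simp add: algebra_simps)
  ultimately show ?thesis
    unfolding vertical_gap_def twist_defect_def \<rho>_def[symmetric] \<beta>_def[symmetric]
    by (simp add: field_simps)
qed

lemma norm_untwisted_dir_diff:
  assumes "z \<noteq> 0"
  shows "cmod (cnj (untwisted_dir z) * untwisted_dir w - 1) =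
    cmod (untwisted_dir z - untwisted_dir w)"
proof -
  have "cnj (untwisted_dir z) * untwisted_dir z = 1"
    using complex_norm_square[of "untwisted_dir z"] norm_untwisted_dir[OF assms]
    by (simp add: mult.commute)
  then have "cnj (untwisted_dir z) * untwisted_dir w - 1 =
      cnj (untwisted_dir z) * (untwisted_dir w - untwisted_dir z)"
    by (simp add: algebra_simps)
  then show ?thesis
    using norm_untwisted_dir[OF assms] by (simp add: norm_mult norm_minus_commute)
qed

lemma near_vertical_gap_le:
  assumes "cmod z \<le> cmod w" "64 * K * (cmod w - cmod z) < cmod w"
  shows "\<bar>vertical_gap F z w\<bar> \<le>
    (2 * K + 2 * K ^ 3) * (cmod w - cmod z)\<^sup>2 + (cmod w)\<^sup>2 * cmod (untwisted_dir z - untwisted_dir w)"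
proof -
  note scales = near_scales[OF assms]
  define \<rho> \<beta> where "\<rho> = cnj (untwisted_dir z) * untwisted_dir w"
    and "\<beta> = twist (cmod w) - twist (cmod z)"
  obtain r r' c where r: "r = cmod z" "r' = cmod w"
    and c: "c = cmod (untwisted_dir z - untwisted_dir w)"
    by simp
  have "c = cmod ((\<rho> - 1) * cis \<beta>)"
    using norm_untwisted_dir_diff[of z w] scales(1) unfolding c \<rho>_def by (simp add: norm_mult)
  then have "\<bar>r * r' * Im ((\<rho> - 1) * cis \<beta>) / 2\<bar> \<le> r * r' * c / 2"
    using abs_Im_le_cmod[of "(\<rho> - 1) * cis \<beta>"] r by (simp add: abs_mult mult_left_mono)
  also have "\<dots> \<le> r'\<^sup>2 * c"
  proof -
    have "r * r' \<le> r'\<^sup>2"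
      using assms r by (simp add: power2_eq_square mult_right_mono)
    then have "r * r' * c \<le> r'\<^sup>2 * c"
      using c by (intro mult_right_mono) auto
    moreover have "0 \<le> r'\<^sup>2 * c"
      using c by simp
    ultimately show ?thesis
      by linarith
  qed
  finally have "\<bar>r * r' * Im ((\<rho> - 1) * cis \<beta>) / 2\<bar> \<le> r'\<^sup>2 * c" .
  moreover have "\<bar>twist_defect r r'\<bar> \<le> (2 * K + 2 * K ^ 3) * (r' - r)\<^sup>2"
    using assms scales r by (intro abs_twist_defect_le) auto
  moreover have "vertical_gap F z w = r * r' * Im ((\<rho> - 1) * cis \<beta>) / 2 - twist_defect r r'"
    unfolding r \<rho>_def \<beta>_def by (rule vertical_gap_eq_twist_defect)
  ultimately show ?thesis
    unfolding r c by linarith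
qed

lemma norm_le_norm_diff_if_rotation_nonpos:
  assumes "Re (cnj (untwisted_dir z) * untwisted_dir w * cis (twist (cmod w) - twist (cmod z))) \<le> 0"
  shows "cmod z \<le> cmod (z - w)"
proof -
  obtain X where X: "Re (cnj (untwisted_dir z) * untwisted_dir w *
      cis (twist (cmod w) - twist (cmod z))) = X"
    by simp
  have "Re (cnj z * w) = cmod z * cmod w * X"
    unfolding X[symmetric] by (subst cnj_mult_untwisted) (simp add: mult.assoc)
  then have "Re (cnj z * w) \<le> 0"
    using assms X by (simp add: mult_nonneg_nonpos)
  then show ?thesis
    by (rule norm_le_norm_diff_if_Re_cnj_mult_nonpos)
qed

lemma near_dichotomy:
  assumes "cmod z \<le> cmod w" "64 * K * (cmod w - cmod z) < cmod w"
  shows "cmod (untwisted_dir z - untwisted_dir w) \<le> 4 * \<bar>Im ((cnj (untwisted_dir z) * untwisted_dir w - 1)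
        * cis (twist (cmod w) - twist (cmod z)))\<bar>
    \<or> cmod z \<le> cmod (z - w)"
proof -
  note scales = near_scales[OF assms]
  then have "z \<noteq> 0" "w \<noteq> 0"
    using assms by auto
  then have "cmod (cnj (untwisted_dir z) * untwisted_dir w) = 1"
    by (simp add: norm_mult norm_untwisted_dir)
  then show ?thesis
    using unimodular_rotation_dichotomy[OF _ scales(3)] norm_untwisted_dir_diff[OF \<open>z \<noteq> 0\<close>]
      norm_le_norm_diff_if_rotation_nonpos[of z w] by metis
qed

lemma near_vertical_gap_ge:
  assumes "cmod z \<le> cmod w" "64 * K * (cmod w - cmod z) < cmod w"
  shows "(cmod w)\<^sup>2 * cmod (untwisted_dir z - untwisted_dir w) \<le>
    16 * \<bar>vertical_gap F z w\<bar> + 16 * (2 * K + 2 * K ^ 3) * (cmod w - cmod z)\<^sup>2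
    + 8 * (cmod (z - w))\<^sup>2"
proof -
  note scales = near_scales[OF assms]
  obtain r r' c I where r: "r = cmod z" "r' = cmod w"
    and c: "c = cmod (untwisted_dir z - untwisted_dir w)"
    and I: "I = Im ((cnj (untwisted_dir z) * untwisted_dir w - 1) *
      cis (twist (cmod w) - twist (cmod z)))"
    by simp
  have "0 \<le> c" "c \<le> 2"
    unfolding c using norm_untwisted_dir_diff_le by simp_all
  from near_dichotomy[OF assms] consider "c \<le> 4 * \<bar>I\<bar>" | "r \<le> cmod (z - w)"
    unfolding c I r by blast
  then show ?thesis
  proof cases
    case 1
    have "r'\<^sup>2 * c \<le> (2 * r) * r' * c"
      using scales r \<open>0 \<le> c\<close> by (simp add: power2_eq_square mult_right_mono)
    also have "\<dots> \<le> 2 * r * r' * (4 * \<bar>I\<bar>)"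
      using 1 r by (intro mult_left_mono) auto
    also have "\<dots> = 16 * \<bar>r * r' * I / 2\<bar>"
      using r by (simp add: abs_mult)
    finally have "r'\<^sup>2 * c \<le> 16 * \<bar>r * r' * I / 2\<bar>" .
    moreover have "\<bar>twist_defect r r'\<bar> \<le> (2 * K + 2 * K ^ 3) * (r' - r)\<^sup>2"
      using assms scales r by (intro abs_twist_defect_le) auto
    moreover have "vertical_gap F z w = r * r' * I / 2 - twist_defect r r'"
      unfolding r I by (rule vertical_gap_eq_twist_defect)
    moreover have "0 \<le> (cmod (z - w))\<^sup>2"
      by simp
    ultimately show ?thesis
      unfolding r c by linarith
  next
    case 2
    then have "r'\<^sup>2 \<le> (2 * cmod (z - w))\<^sup>2"
      using scales r by (intro power_mono) auto
    then have "r'\<^sup>2 * c \<le> 8 * (cmod (z - w))\<^sup>2"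
      using \<open>c \<le> 2\<close> \<open>0 \<le> c\<close> mult_mono[of "r'\<^sup>2" "4 * (cmod (z - w))\<^sup>2" c 2]
      by (simp add: power_mult_distrib)
    moreover have "0 \<le> 16 * (2 * K + 2 * K ^ 3) * (r' - r)\<^sup>2"
      using K_ge_1 by simp
    ultimately show ?thesis
      unfolding r c by simp
  qed
qed

lemma graph_sqdist_bounds:
  assumes "z \<noteq> 0" "w \<noteq> 0" "cmod z \<le> cmod w"
  shows "graph_sqdist z w \<le>
      576 * (cmod w)\<^sup>2 * cmod (untwisted_dir z - untwisted_dir w) + 48 * (cmod w - cmod z)\<^sup>2"
    and "(cmod w)\<^sup>2 * cmod (untwisted_dir z - untwisted_dir w) \<le>
      392 * graph_sqdist z w + 9408 * (cmod w - cmod z)\<^sup>2"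
proof -
  define a a' where "a = Arg (untwisted_dir z)" and "a' = Arg (untwisted_dir w)"
  define u v where "u m = snowflake_coord m a" and "v m = snowflake_coord m a'" for m
  obtain r r' c S G where r: "r = cmod z" "r' = cmod w"
    and c: "c = cmod (untwisted_dir z - untwisted_dir w)"
    and S: "S = (\<Sum>m<6. (cmod (u m - v m))\<^sup>2)" and G: "G = graph_sqdist z w"
    by simp
  have c_cis: "c = cmod (cis a - cis a')"
    unfolding c a_def a'_def using assms by (simp add: cis_Arg_untwisted_dir)
  have G_eq: "G = (\<Sum>m<6. (cmod (of_real r * u m - of_real r' * v m))\<^sup>2)"
    unfolding G r graph_sqdist_def graph_coord_def u_def v_def a_def a'_def ..
  have "0 \<le> r" "r \<le> r'"
    using assms r by auto
  have "G \<le> (\<Sum>m<6::nat. 2 * r'\<^sup>2 * (cmod (u m - v m))\<^sup>2 + 8 * (r' - r)\<^sup>2)"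
    unfolding G_eq using \<open>0 \<le> r\<close> \<open>r \<le> r'\<close>
    by (intro sum_mono norm_scaled_diff_le) (simp_all add: u_def norm_snowflake_coord_le)
  then have G_le: "G \<le> 2 * r'\<^sup>2 * S + 48 * (r' - r)\<^sup>2"
    unfolding S by (simp add: sum.distrib sum_distrib_left)
  have "r'\<^sup>2 * S \<le> (\<Sum>m<6::nat. 2 * (cmod (of_real r * u m - of_real r' * v m))\<^sup>2 + 8 * (r' - r)\<^sup>2)"
    unfolding S sum_distrib_left using \<open>0 \<le> r\<close> \<open>r \<le> r'\<close>
    by (intro sum_mono norm_scaled_diff_ge) (simp_all add: u_def norm_snowflake_coord_le)
  then have S_le: "r'\<^sup>2 * S \<le> 2 * G + 48 * (r' - r)\<^sup>2"
    unfolding G_eq by (simp add: sum.distrib sum_distrib_left)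
  have "S \<le> 288 * c" "c / 196 \<le> S"
    unfolding S c_cis u_def v_def by (rule snowflake_embedding_circle)+
  then have "r'\<^sup>2 * S \<le> r'\<^sup>2 * (288 * c)" "r'\<^sup>2 * (c / 196) \<le> r'\<^sup>2 * S"
    by (intro mult_left_mono; simp)+
  then show "graph_sqdist z w \<le> 576 * (cmod w)\<^sup>2 * cmod (untwisted_dir z - untwisted_dir w) +
      48 * (cmod w - cmod z)\<^sup>2"
    and "(cmod w)\<^sup>2 * cmod (untwisted_dir z - untwisted_dir w) \<le>
      392 * graph_sqdist z w + 9408 * (cmod w - cmod z)\<^sup>2"
    using G_le S_le unfolding r[symmetric] c[symmetric] G[symmetric] by linarith+
qed

lemma near_comparison:
  assumes "cmod z \<le> cmod w" "64 * K * (cmod w - cmod z) < cmod w"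
  shows "\<bar>vertical_gap F z w\<bar> \<le>
      (2 * K + 2 * K ^ 3 + 9408) * ((cmod (z - w))\<^sup>2 + graph_sqdist z w)"
    and "graph_sqdist z w \<le>
      9216 * (2 * K + 2 * K ^ 3 + 1) * ((cmod (z - w))\<^sup>2 + \<bar>vertical_gap F z w\<bar>)"
proof -
  note scales = near_scales[OF assms]
  obtain E P G X D Z where E: "E = 2 * K + 2 * K ^ 3" and P: "P = \<bar>vertical_gap F z w\<bar>"
    and G: "G = graph_sqdist z w"
    and X: "X = (cmod w)\<^sup>2 * cmod (untwisted_dir z - untwisted_dir w)"
    and D: "D = (cmod w - cmod z)\<^sup>2" and Z: "Z = (cmod (z - w))\<^sup>2"
    by simp
  have "w \<noteq> 0"
    using assms scales by auto
  have P_le: "P \<le> E * D + X"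
    using near_vertical_gap_le[OF assms] unfolding E P X D .
  have X_le_P: "X \<le> 16 * P + 16 * (E * D) + 8 * Z"
    using near_vertical_gap_ge[OF assms] unfolding E P X D Z by (simp only: mult.assoc)
  have G_le: "G \<le> 576 * X + 48 * D" and X_le_G: "X \<le> 392 * G + 9408 * D"
    using graph_sqdist_bounds[of z w] scales(1) \<open>w \<noteq> 0\<close> assms(1)
    unfolding G X D by (simp_all add: mult.assoc)
  have "D \<le> Z"
    unfolding D Z using norm_triangle_ineq2[of w z] assms(1)
    by (intro power_mono) (simp_all add: norm_minus_commute)
  moreover have "0 \<le> E" "0 \<le> G" "0 \<le> P" "0 \<le> Z"
    unfolding E G P Z using K_ge_1 graph_sqdist_nonneg by simp_all
  ultimately have "E * D \<le> E * Z" "0 \<le> E * G" "0 \<le> E * P"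
    by (simp_all add: mult_left_mono)
  have "(E + 9408) * (Z + G) = E * Z + E * G + 9408 * Z + 9408 * G"
    by (simp add: algebra_simps)
  then show "\<bar>vertical_gap F z w\<bar> \<le>
      (2 * K + 2 * K ^ 3 + 9408) * ((cmod (z - w))\<^sup>2 + graph_sqdist z w)"
    using P_le X_le_G \<open>D \<le> Z\<close> \<open>E * D \<le> E * Z\<close> \<open>0 \<le> E * G\<close> \<open>0 \<le> G\<close>
    unfolding E[symmetric] P[symmetric] G[symmetric] Z[symmetric] by linarith
  have "9216 * (E + 1) * (Z + P) = 9216 * (E * Z) + 9216 * (E * P) + 9216 * Z + 9216 * P"
    by (simp add: algebra_simps)
  then show "graph_sqdist z w \<le>
      9216 * (2 * K + 2 * K ^ 3 + 1) * ((cmod (z - w))\<^sup>2 + \<bar>vertical_gap F z w\<bar>)"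
    using X_le_P G_le \<open>D \<le> Z\<close> \<open>E * D \<le> E * Z\<close> \<open>0 \<le> E * P\<close> \<open>0 \<le> P\<close> \<open>0 \<le> Z\<close>
    unfolding E[symmetric] P[symmetric] G[symmetric] Z[symmetric] by linarith
qed

definition comparison_const :: real where
  "comparison_const = (2 * K + 2 * K ^ 3 + 9408) + 9216 * (2 * K + 2 * K ^ 3 + 1)
    + 2 * K * (64 * K)\<^sup>2 + 96 * (64 * K)\<^sup>2"

lemma comparison_const_nonneg: "0 \<le> comparison_const"
  using K_ge_1 unfolding comparison_const_def by simp

lemma comparison_const_ge:
  "2 * K + 2 * K ^ 3 + 9408 \<le> comparison_const" "9216 * (2 * K + 2 * K ^ 3 + 1) \<le> comparison_const"
  "2 * K * (64 * K)\<^sup>2 \<le> comparison_const" "96 * (64 * K)\<^sup>2 \<le> comparison_const"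
proof -
  have "0 \<le> 2 * K + 2 * K ^ 3" "0 \<le> 2 * K * (64 * K)\<^sup>2"
    using K_ge_1 by simp_all
  then show "2 * K + 2 * K ^ 3 + 9408 \<le> comparison_const"
    "9216 * (2 * K + 2 * K ^ 3 + 1) \<le> comparison_const"
    "2 * K * (64 * K)\<^sup>2 \<le> comparison_const" "96 * (64 * K)\<^sup>2 \<le> comparison_const"
    unfolding comparison_const_def by (simp_all add: add_increasing add_increasing2)
qed

lemma comparison_ordered:
  assumes "cmod z \<le> cmod w"
  shows "\<bar>vertical_gap F z w\<bar> \<le> comparison_const * ((cmod (z - w))\<^sup>2 + graph_sqdist z w) \<and>
    graph_sqdist z w \<le> comparison_const * ((cmod (z - w))\<^sup>2 + \<bar>vertical_gap F z w\<bar>)"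
proof -
  let ?C = comparison_const and ?Z = "(cmod (z - w))\<^sup>2"
  have weaken: "x \<le> ?C * y" if "x \<le> c * y" "c \<le> ?C" "0 \<le> y" for x y c :: real
    using that mult_right_mono[of c ?C y] by linarith
  have "0 \<le> ?Z + graph_sqdist z w" "0 \<le> ?Z + \<bar>vertical_gap F z w\<bar>"
    using graph_sqdist_nonneg[of z w] by simp_all
  show ?thesis
  proof (cases "cmod w \<le> 64 * K * (cmod w - cmod z)")
    case True
    note far = far_scale[OF assms True]
    have "2 * K * (cmod w)\<^sup>2 \<le> 2 * K * ((64 * K)\<^sup>2 * ?Z)"
      using far K_ge_1 by (intro mult_left_mono) auto
    then have "\<bar>vertical_gap F z w\<bar> \<le> 2 * K * (64 * K)\<^sup>2 * ?Z"
      using abs_vertical_gap_le[OF assms] by (simp only: mult.assoc)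
    then have "\<bar>vertical_gap F z w\<bar> \<le> ?C * ?Z"
      by (rule weaken[OF _ comparison_const_ge(3)]) simp
    moreover have "graph_sqdist z w \<le> 96 * (64 * K)\<^sup>2 * ?Z"
      using graph_sqdist_le[OF assms] far by simp
    then have "graph_sqdist z w \<le> ?C * ?Z"
      by (rule weaken[OF _ comparison_const_ge(4)]) simp
    moreover have "?C * ?Z \<le> ?C * (?Z + graph_sqdist z w)"
      "?C * ?Z \<le> ?C * (?Z + \<bar>vertical_gap F z w\<bar>)"
      using comparison_const_nonneg graph_sqdist_nonneg[of z w] by (simp_all add: mult_left_mono)
    ultimately show ?thesis
      by linarith
  next
    case False
    then have "64 * K * (cmod w - cmod z) < cmod w"
      by simp
    note near = near_comparison[OF assms this]
    show ?thesis
      using weaken[OF near(1) comparison_const_ge(1)] weaken[OF near(2) comparison_const_ge(2)]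
        \<open>0 \<le> ?Z + graph_sqdist z w\<close> \<open>0 \<le> ?Z + \<bar>vertical_gap F z w\<bar>\<close> by simp
  qed
qed

lemma vertical_gap_comparable_graph_sqdist:
  "\<bar>vertical_gap F z w\<bar> \<le> comparison_const * ((cmod (z - w))\<^sup>2 + graph_sqdist z w)"
  "graph_sqdist z w \<le> comparison_const * ((cmod (z - w))\<^sup>2 + \<bar>vertical_gap F z w\<bar>)"
  using comparison_ordered[of z w] comparison_ordered[of w z] linorder_linear[of "cmod z" "cmod w"]
  by (auto simp: vertical_gap_swap[of F w z] graph_sqdist_swap[of w z] norm_minus_commute[of w z])

definition graph_embedding :: "heis \<Rightarrow> nat \<Rightarrow> complex" where
  "graph_embedding p j = (let z = Complex (fst p) (fst (snd p)) in
    if j = 0 then z else graph_coord (j - 1) z)"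

lemma graph_embedding_sqdist:
  "(\<Sum>j<7. (cmod (graph_embedding (x, y, s) j - graph_embedding (x', y', s') j))\<^sup>2) =
    \<bar>x - x'\<bar>\<^sup>2 + \<bar>y - y'\<bar>\<^sup>2 + graph_sqdist (Complex x y) (Complex x' y')"
proof -
  have "(7::nat) = Suc 6"
    by simp
  then show ?thesis
    unfolding graph_embedding_def graph_sqdist_def
    by (simp only: sum.lessThan_Suc_shift) (simp add: cmod_power2)
qed

theorem rot_graph_bilip_embeds: "bilip_embeds_Rn (rot_graph F) dH 14"
proof -
  let ?L = "sqrt (3 * (1 + comparison_const))"
  have "bilip_embeds_Rn (rot_graph F) dH (2 * 7)"
  proof (rule bilip_embeds_Rn_complexI[where f = graph_embedding and L = ?L])
    show "1 \<le> ?L"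
      using comparison_const_nonneg by simp
    fix a b
    assume "a \<in> rot_graph F" "b \<in> rot_graph F"
    then obtain x y x' y' where a: "a = (x, y, F (sqrt (x\<^sup>2 + y\<^sup>2)))"
      and b: "b = (x', y', F (sqrt (x'\<^sup>2 + y'\<^sup>2)))"
      unfolding rot_graph_def by blast
    define z w where "z = Complex x y" and "w = Complex x' y'"
    have Z: "(cmod (z - w))\<^sup>2 = \<bar>x - x'\<bar>\<^sup>2 + \<bar>y - y'\<bar>\<^sup>2"
      unfolding z_def w_def by (simp add: cmod_power2)
    note bounds = sqrt_comparable_sum[OF abs_ge_zero abs_ge_zero graph_sqdist_nonneg
        comparison_const_nonneg vertical_gap_comparable_graph_sqdist[of z w, unfolded Z]]
    show "dH a b / ?L \<le> sqrt (\<Sum>j<7. (cmod (graph_embedding a j - graph_embedding b j))\<^sup>2)"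
      and "sqrt (\<Sum>j<7. (cmod (graph_embedding a j - graph_embedding b j))\<^sup>2) \<le> ?L * dH a b"
      unfolding a b dH_rot_graph_points graph_embedding_sqdist z_def[symmetric] w_def[symmetric]
      by (fact bounds)+
  qed
  then show ?thesis
    by simp
qed

end

theorem corollary5p2:
  fixes F :: "real \<Rightarrow> real" and A :: "heis set"
  assumes "C11_flat_at_0 F"
    and "A \<subseteq> rot_graph F"
    and "compactin (Metric_space.mtopology UNIV dH) A"
  shows "\<exists>n. bilip_embeds_Rn A dH n"
proof -
  obtain F' K where "C11_flat_profile F F' K"
    using assms(1) by (rule C11_flat_at_0_imp_profile)
  then have "bilip_embeds_Rn (rot_graph F) dH 14"
    by (rule C11_flat_profile.rot_graph_bilip_embeds)
  then show ?thesis
    using assms(2) bilip_embeds_Rn_subset by blast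
qed

end
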